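(* Let $\epsilon>0$ and let $C^*$ be the minimum cost of a valid flow for the generalized network flow instance at time $T$ with all edge capacities $\mu_e$ replaced by $\mu_e/(1+\epsilon)$. Then the final heights produced by the augmenting-path algorithm (run with the original capacities $\mu$) satisfy $\sum_{t=1}^{T}\mathrm{height}_T(s_t)\le\frac{1+\epsilon}{\epsilon}C^*$.
   Context: Generalized network flow instance: digraph $G=(V,E)$ without anti-parallel edges, sources with no incoming edges, sink $\tau$ with no outgoing edges, edge capacities $\mu_e>0$, costs $c_e>0$, gains $\gamma_e>0$; convention: every vertex $v\ne\tau$ has a dummy edge $v\tau$ of infinite capacity, gain $1$ and sufficiently large cost $B$. A valid flow $x\ge0$ satisfies $x_e\le\mu_e$ and $\sum_{e\in\delta^+(v)}x_e-\sum_{e\in\delta^-(v)}\gamma_ex_e=a_v$ for all $v\ne\tau$, where $a_v=1$ for sources and $0$ otherwise; its cost is $\sum_ec_ex_e$. Online: sources $s_1,\dots,s_T$ arrive one at a time with their outgoing edges. Residual graph $G^x$: forward edge $uv$ (capacity $\mu_{uv}-x_{uv}$, cost $c_{uv}$, gain $\gamma_{uv}$) if $x_{uv}<\mu_{uv}$; backward edge $vu$ (capacity $\gamma_{uv}x_{uv}$, cost $0$, gain $1/\gamma_{uv}$) if $x_{uv}>0$. A fractional augmenting path from $s\ne\tau$ in $G^x$ is $f\ge0$ on residual edges with out-minus-gain-weighted-in flow $1$ at $s$ and $0$ at vertices other than $s,\tau$; cost $\sum_ec^x_ef_e$. It is an augmenting path if its support is a path from $s$ to $\tau$, or a cycle through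 $s$ avoiding $\tau$, or a cycle avoiding $s,\tau$ plus a path from $s$ to it internally disjoint from it. Augmenting $x$ by $\theta$ using $f$: $x_{uv}\gets x_{uv}+\theta f_{uv}$ on forward residual edges, $x_{uv}\gets x_{uv}-\theta f_{vu}/\gamma_{uv}$ on backward residual edges $vu$. The augmenting-path algorithm: $x^{(0)}=0$; at time $t$, add $s_t$, start from $x^{(t-1)}$ (zero on new edges), and while the outflow of $s_t$ is less than $1$, augment by the largest feasible $\theta$ (keeping $0\le x_e\le\mu_e$ and outflow of $s_t$ at most $1$) along a cheapest augmenting path from $s_t$ in the current residual graph; the result is $x^{(t)}$. $\mathrm{height}_T(v)$ for $v\ne\tau$ is the minimum cost of an augmenting path from $v$ in $G^{x^{(T)}}$. *)

theory Defs
  imports "HOL-Analysis.Analysis" "HOL-Library.Extended_Real"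
begin

(* A generalized network flow instance (final graph, i.e. at time T).
   Edges are abstract indices with tail/head maps, so that a dummy edge v->tau may
   coexist with an original edge v->tau. Capacities are extended reals (dummy edges
   have capacity infinity). *)
record ('v,'e) gnf =
  verts   :: "'v set"
  edges   :: "'e set"
  etail   :: "'e \<Rightarrow> 'v"
  ehead   :: "'e \<Rightarrow> 'v"
  sink    :: "'v"
  cap     :: "'e \<Rightarrow> ereal"
  cst     :: "'e \<Rightarrow> real"
  gain    :: "'e \<Rightarrow> real"
  src     :: "nat \<Rightarrow> 'v"
  horizon :: nat

definition gnf_instance :: "('v,'e) gnf \<Rightarrow> real \<Rightarrow> ('v \<Rightarrow> 'e) \<Rightarrow> bool" where
  "gnf_instance I B dummy \<longleftrightarrow>
     finite (verts I) \<and> finite (edges I) \<and> sink I \<in> verts I \<and>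
     (\<forall>e\<in>edges I. etail I e \<in> verts I \<and> ehead I e \<in> verts I) \<and>
     \<comment> \<open>no anti-parallel edges (in particular no loops)\<close>
     (\<forall>e\<in>edges I. \<forall>e'\<in>edges I. \<not> (etail I e = ehead I e' \<and> ehead I e = etail I e')) \<and>
     \<comment> \<open>the original graph is a simple digraph: only dummy edges may be parallel to others\<close>
     inj_on (\<lambda>e. (etail I e, ehead I e)) (edges I - dummy ` (verts I - {sink I})) \<and>
     \<comment> \<open>sink has no outgoing edges\<close>
     (\<forall>e\<in>edges I. etail I e \<noteq> sink I) \<and>
     \<comment> \<open>sources s_1..s_T: distinct vertices with no incoming edges\<close>
     inj_on (src I) {1..horizon I} \<and>
     (\<forall>t\<in>{1..horizon I}. src I t \<in> verts I \<and> src I t \<noteq> sink I \<and>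
         (\<forall>e\<in>edges I. ehead I e \<noteq> src I t)) \<and>
     \<comment> \<open>positive capacities, costs and gains\<close>
     (\<forall>e\<in>edges I. cap I e > 0 \<and> cst I e > 0 \<and> gain I e > 0) \<and>
     \<comment> \<open>dummy edges\<close>
     B > 0 \<and>
     (\<forall>v\<in>verts I - {sink I}. dummy v \<in> edges I \<and> etail I (dummy v) = v \<and>
         ehead I (dummy v) = sink I \<and> cap I (dummy v) = \<infinity> \<and>
         gain I (dummy v) = 1 \<and> cst I (dummy v) = B) \<and>
     (\<forall>e\<in>edges I - dummy ` (verts I - {sink I}). cap I e \<noteq> \<infinity>)"

definition verts_at :: "('v,'e) gnf \<Rightarrow> nat \<Rightarrow> 'v set" where
  "verts_at I t = verts I - src I ` {t<..horizon I}"

definition edges_at :: "('v,'e) gnf \<Rightarrow> nat \<Rightarrow> 'e set" where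
  "edges_at I t = {e \<in> edges I. etail I e \<notin> src I ` {t<..horizon I}}"

definition demand :: "('v,'e) gnf \<Rightarrow> nat \<Rightarrow> 'v \<Rightarrow> real" where
  "demand I t v = (if v \<in> src I ` {1..t} then 1 else 0)"

definition excess :: "('v,'e) gnf \<Rightarrow> nat \<Rightarrow> ('e \<Rightarrow> real) \<Rightarrow> 'v \<Rightarrow> real" where
  "excess I t x v = (\<Sum>e\<in>{e\<in>edges_at I t. etail I e = v}. x e)
                   - (\<Sum>e\<in>{e\<in>edges_at I t. ehead I e = v}. gain I e * x e)"

definition outflow :: "('v,'e) gnf \<Rightarrow> nat \<Rightarrow> ('e \<Rightarrow> real) \<Rightarrow> 'v \<Rightarrow> real" where
  "outflow I t x v = (\<Sum>e\<in>{e\<in>edges_at I t. etail I e = v}. x e)"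

definition valid_flow :: "('v,'e) gnf \<Rightarrow> nat \<Rightarrow> ('e \<Rightarrow> ereal) \<Rightarrow> ('e \<Rightarrow> real) \<Rightarrow> bool" where
  "valid_flow I t m x \<longleftrightarrow>
     (\<forall>e\<in>edges_at I t. 0 \<le> x e \<and> ereal (x e) \<le> m e) \<and>
     (\<forall>v\<in>verts_at I t - {sink I}. excess I t x v = demand I t v)"

definition flow_cost :: "('v,'e) gnf \<Rightarrow> nat \<Rightarrow> ('e \<Rightarrow> real) \<Rightarrow> real" where
  "flow_cost I t x = (\<Sum>e\<in>edges_at I t. cst I e * x e)"

definition min_flow_cost :: "('v,'e) gnf \<Rightarrow> nat \<Rightarrow> ('e \<Rightarrow> ereal) \<Rightarrow> real" where
  "min_flow_cost I t m = Inf (flow_cost I t ` {x. valid_flow I t m x})"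

datatype 'e arc = Fw 'e | Bw 'e

fun atail :: "('v,'e) gnf \<Rightarrow> 'e arc \<Rightarrow> 'v" where
  "atail I (Fw e) = etail I e"
| "atail I (Bw e) = ehead I e"

fun ahead :: "('v,'e) gnf \<Rightarrow> 'e arc \<Rightarrow> 'v" where
  "ahead I (Fw e) = ehead I e"
| "ahead I (Bw e) = etail I e"

fun arc_cost :: "('v,'e) gnf \<Rightarrow> 'e arc \<Rightarrow> real" where
  "arc_cost I (Fw e) = cst I e"
| "arc_cost I (Bw e) = 0"

fun arc_gain :: "('v,'e) gnf \<Rightarrow> 'e arc \<Rightarrow> real" where
  "arc_gain I (Fw e) = gain I e"
| "arc_gain I (Bw e) = 1 / gain I e"

definition all_arcs :: "('v,'e) gnf \<Rightarrow> nat \<Rightarrow> 'e arc set" where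
  "all_arcs I t = Fw ` edges_at I t \<union> Bw ` edges_at I t"

definition res_arcs :: "('v,'e) gnf \<Rightarrow> nat \<Rightarrow> ('e \<Rightarrow> real) \<Rightarrow> 'e arc set" where
  "res_arcs I t x = {Fw e | e. e \<in> edges_at I t \<and> ereal (x e) < cap I e}
                  \<union> {Bw e | e. e \<in> edges_at I t \<and> x e > 0}"

definition frac_aug :: "('v,'e) gnf \<Rightarrow> nat \<Rightarrow> ('e \<Rightarrow> real) \<Rightarrow> 'v \<Rightarrow> ('e arc \<Rightarrow> real) \<Rightarrow> bool" where
  "frac_aug I t x u f \<longleftrightarrow>
     (\<forall>a. f a \<ge> 0) \<and> (\<forall>a. f a \<noteq> 0 \<longrightarrow> a \<in> res_arcs I t x) \<and>
     (\<forall>w\<in>verts_at I t - {sink I}.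
        (\<Sum>a\<in>{a\<in>all_arcs I t. atail I a = w}. f a)
        - (\<Sum>a\<in>{a\<in>all_arcs I t. ahead I a = w}. arc_gain I a * f a)
        = (if w = u then 1 else 0))"

definition aug_cost :: "('v,'e) gnf \<Rightarrow> nat \<Rightarrow> ('e arc \<Rightarrow> real) \<Rightarrow> real" where
  "aug_cost I t f = (\<Sum>a\<in>all_arcs I t. arc_cost I a * f a)"

definition walk :: "('v,'e) gnf \<Rightarrow> 'v list \<Rightarrow> 'e arc list \<Rightarrow> bool" where
  "walk I vs as \<longleftrightarrow> length vs = Suc (length as) \<and>
     (\<forall>i<length as. atail I (as ! i) = vs ! i \<and> ahead I (as ! i) = vs ! Suc i)"

definition supp :: "('e arc \<Rightarrow> real) \<Rightarrow> 'e arc set" where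
  "supp f = {a. f a > 0}"

definition aug_path :: "('v,'e) gnf \<Rightarrow> nat \<Rightarrow> ('e \<Rightarrow> real) \<Rightarrow> 'v \<Rightarrow> ('e arc \<Rightarrow> real) \<Rightarrow> bool" where
  "aug_path I t x u f \<longleftrightarrow> frac_aug I t x u f \<and>
     ((\<exists>vs as. walk I vs as \<and> distinct vs \<and> hd vs = u \<and> last vs = sink I \<and> set as = supp f)
    \<or> (\<exists>vs as. vs \<noteq> [] \<and> walk I (vs @ [hd vs]) as \<and> distinct vs \<and> hd vs = u \<and>
               sink I \<notin> set vs \<and> set as = supp f)
    \<or> (\<exists>cs cas ps pas. cs \<noteq> [] \<and> walk I (cs @ [hd cs]) cas \<and> distinct cs \<and>
               u \<notin> set cs \<and> sink I \<notin> set cs \<and>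
               walk I ps pas \<and> distinct ps \<and> hd ps = u \<and> last ps \<in> set cs \<and>
               set (butlast ps) \<inter> set cs = {} \<and> supp f = set cas \<union> set pas))"

definition augment :: "('v,'e) gnf \<Rightarrow> ('e \<Rightarrow> real) \<Rightarrow> ('e arc \<Rightarrow> real) \<Rightarrow> real \<Rightarrow> ('e \<Rightarrow> real)" where
  "augment I x f \<theta> = (\<lambda>e. x e + \<theta> * f (Fw e) - \<theta> * f (Bw e) / gain I e)"

definition feasible_step :: "('v,'e) gnf \<Rightarrow> nat \<Rightarrow> ('e \<Rightarrow> real) \<Rightarrow> ('e arc \<Rightarrow> real) \<Rightarrow> real \<Rightarrow> bool" where
  "feasible_step I t x f \<theta> \<longleftrightarrow> \<theta> \<ge> 0 \<and>
     (\<forall>e\<in>edges_at I t. 0 \<le> augment I x f \<theta> e \<and> ereal (augment I x f \<theta> e) \<le> cap I e) \<and>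
     outflow I t (augment I x f \<theta>) (src I t) \<le> 1"

definition alg_step :: "('v,'e) gnf \<Rightarrow> nat \<Rightarrow> ('e \<Rightarrow> real) \<Rightarrow> ('e \<Rightarrow> real) \<Rightarrow> bool" where
  "alg_step I t x x' \<longleftrightarrow> outflow I t x (src I t) < 1 \<and>
     (\<exists>f \<theta>. aug_path I t x (src I t) f \<and>
            (\<forall>g. aug_path I t x (src I t) g \<longrightarrow> aug_cost I t f \<le> aug_cost I t g) \<and>
            feasible_step I t x f \<theta> \<and>
            (\<forall>\<theta>'. feasible_step I t x f \<theta>' \<longrightarrow> \<theta>' \<le> \<theta>) \<and>
            x' = augment I x f \<theta>)"

definition alg_phase :: "('v,'e) gnf \<Rightarrow> nat \<Rightarrow> ('e \<Rightarrow> real) \<Rightarrow> ('e \<Rightarrow> real) \<Rightarrow> bool" where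
  "alg_phase I t x x' \<longleftrightarrow> (alg_step I t)\<^sup>*\<^sup>* x x' \<and> \<not> outflow I t x' (src I t) < 1"

definition alg_run :: "('v,'e) gnf \<Rightarrow> (nat \<Rightarrow> 'e \<Rightarrow> real) \<Rightarrow> bool" where
  "alg_run I xs \<longleftrightarrow> xs 0 = (\<lambda>_. 0) \<and> (\<forall>t\<in>{1..horizon I}. alg_phase I t (xs (t - 1)) (xs t))"

definition height :: "('v,'e) gnf \<Rightarrow> nat \<Rightarrow> ('e \<Rightarrow> real) \<Rightarrow> 'v \<Rightarrow> real" where
  "height I t x v = Inf (aug_cost I t ` {f. aug_path I t x v f})"

end

theory Submission
  imports Defs
begin

(* Let x be the final flow and y a valid flow of cost C* for the capacities mu/(1+eps).
   The residual flow g that turns x into (1+eps) y (forward along edges where (1+eps) y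
   exceeds x, backward where it falls short) has excess at least eps at every source and
   nonnegative excess elsewhere, and it costs at most (1+eps) C*.  Such a residual flow can
   be peeled into augmenting paths, each starting at a vertex of positive excess, and cycles
   of gain at least 1, whose removal only increases the remaining excesses.  An augmenting
   path from v costs at least height(v), so the sum of the heights weighted by the excesses
   of g is at most the cost of g, whence eps * sum_t height(s_t) <= (1+eps) C*. *)

lemma res_arcs_subset_all_arcs: "res_arcs I t x \<subseteq> all_arcs I t"
  unfolding res_arcs_def all_arcs_def by auto

lemma edges_at_subset: "edges_at I t \<subseteq> edges I"
  unfolding edges_at_def by auto

lemma edges_at_horizon [simp]: "edges_at I (horizon I) = edges I"
  unfolding edges_at_def by auto

lemma verts_at_horizon [simp]: "verts_at I (horizon I) = verts I"
  unfolding verts_at_def by auto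

locale gnf_network =
  fixes I :: "('v,'e) gnf" and B :: real and dummy :: "'v \<Rightarrow> 'e"
  assumes gnf: "gnf_instance I B dummy"
begin

abbreviation inner_verts :: "nat \<Rightarrow> 'v set" where
  "inner_verts t \<equiv> verts_at I t - {sink I}"

lemma finite_verts: "finite (verts I)"
  and finite_edges: "finite (edges I)"
  and edge_tail_in_verts: "e \<in> edges I \<Longrightarrow> etail I e \<in> verts I"
  and edge_head_in_verts: "e \<in> edges I \<Longrightarrow> ehead I e \<in> verts I"
  and cap_pos: "e \<in> edges I \<Longrightarrow> 0 < cap I e"
  and cst_pos: "e \<in> edges I \<Longrightarrow> 0 < cst I e"
  and gain_pos: "e \<in> edges I \<Longrightarrow> 0 < gain I e"
  and inj_on_src: "inj_on (src I) {1..horizon I}"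
  and src_inner: "t \<in> {1..horizon I} \<Longrightarrow> src I t \<in> verts I - {sink I}"
  and no_edge_into_src: "t \<in> {1..horizon I} \<Longrightarrow> e \<in> edges I \<Longrightarrow> ehead I e \<noteq> src I t"
  and dummy_edge: "v \<in> verts I - {sink I} \<Longrightarrow>
      dummy v \<in> edges I \<and> etail I (dummy v) = v \<and> ehead I (dummy v) = sink I \<and> cap I (dummy v) = \<infinity>"
  using gnf unfolding gnf_instance_def by blast+

lemma finite_edges_at: "finite (edges_at I t)"
  using finite_edges edges_at_subset by (rule finite_subset[rotated])

lemma finite_all_arcs: "finite (all_arcs I t)"
  unfolding all_arcs_def using finite_edges_at by blast

lemma finite_inner_verts: "finite (inner_verts t)"
  unfolding verts_at_def using finite_verts by auto

lemma arc_gain_pos: "a \<in> all_arcs I t \<Longrightarrow> 0 < arc_gain I a"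
  unfolding all_arcs_def using edges_at_subset gain_pos by fastforce

lemma arc_cost_nonneg: "a \<in> all_arcs I t \<Longrightarrow> 0 \<le> arc_cost I a"
  unfolding all_arcs_def using edges_at_subset cst_pos by (fastforce intro: less_imp_le)

lemma arc_ends_in_verts_at:
  assumes "a \<in> all_arcs I t"
  shows "atail I a \<in> verts_at I t" "ahead I a \<in> verts_at I t"
proof -
  obtain e where e: "e \<in> edges_at I t" "a = Fw e \<or> a = Bw e"
    using assms unfolding all_arcs_def by auto
  then have e_edge: "e \<in> edges I" and "etail I e \<notin> src I ` {t<..horizon I}"
    unfolding edges_at_def by auto
  moreover have "ehead I e \<notin> src I ` {t<..horizon I}"
  proof
    assume "ehead I e \<in> src I ` {t<..horizon I}"
    then obtain t' where "t < t'" "t' \<le> horizon I" "ehead I e = src I t'" by auto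
    then show False using no_edge_into_src[OF _ e_edge, of t'] by simp
  qed
  ultimately have "etail I e \<in> verts_at I t" "ehead I e \<in> verts_at I t"
    using edge_tail_in_verts edge_head_in_verts unfolding verts_at_def by auto
  then show "atail I a \<in> verts_at I t" "ahead I a \<in> verts_at I t" using e(2) by auto
qed

end

section \<open>Excess of flows on residual arcs\<close>

definition arc_excess :: "('v,'e) gnf \<Rightarrow> nat \<Rightarrow> ('e arc \<Rightarrow> real) \<Rightarrow> 'v \<Rightarrow> real" where
  "arc_excess I t f w = (\<Sum>a\<in>{a\<in>all_arcs I t. atail I a = w}. f a)
        - (\<Sum>a\<in>{a\<in>all_arcs I t. ahead I a = w}. arc_gain I a * f a)"

lemma arc_excess_diff:
  "arc_excess I t (\<lambda>a. f a - c * g a) w = arc_excess I t f w - c * arc_excess I t g w"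
  unfolding arc_excess_def by (simp add: sum_subtractf sum_distrib_left algebra_simps)

lemma excess_add_scaled:
  "excess I t (\<lambda>e. x e + c * y e) w = excess I t x w + c * excess I t y w"
  unfolding excess_def by (simp add: sum.distrib sum_distrib_left algebra_simps)

lemma excess_diff:
  "excess I t (\<lambda>e. z e - x e) w = excess I t z w - excess I t x w"
  unfolding excess_def by (simp add: sum_subtractf algebra_simps)

lemma excess_scale:
  "excess I t (\<lambda>e. c * y e) w = c * excess I t y w"
  unfolding excess_def by (simp add: sum_distrib_left algebra_simps)

lemma excess_cong: "(\<And>e. e \<in> edges_at I t \<Longrightarrow> x e = x' e) \<Longrightarrow> excess I t x w = excess I t x' w"
  unfolding excess_def by (intro arg_cong2[where f = minus] sum.cong) auto

lemma aug_cost_diff: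
  "aug_cost I t (\<lambda>a. f a - c * g a) = aug_cost I t f - c * aug_cost I t g"
  unfolding aug_cost_def by (simp add: sum_subtractf sum_distrib_left algebra_simps)

lemma aug_path_frac_aug: "aug_path I t x u f \<Longrightarrow> frac_aug I t x u f"
  unfolding aug_path_def by (rule conjunct1)

lemma aug_path_nonneg: "aug_path I t x u f \<Longrightarrow> 0 \<le> f a"
  by (drule aug_path_frac_aug) (simp add: frac_aug_def)

lemma frac_aug_arc_excess:
  "frac_aug I t x u f \<Longrightarrow> w \<in> verts_at I t - {sink I} \<Longrightarrow> arc_excess I t f w = (if w = u then 1 else 0)"
  unfolding frac_aug_def arc_excess_def by blast

lemma frac_aug_supp_nonempty:
  assumes "frac_aug I t x u f" "u \<in> verts_at I t - {sink I}"
  shows "supp f \<noteq> {}"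
proof
  assume "supp f = {}"
  then have "\<not> 0 < f a" for a by (simp add: supp_def)
  moreover have "0 \<le> f a" for a using assms(1) unfolding frac_aug_def by blast
  ultimately have "f a = 0" for a by (meson antisym not_less)
  then have "arc_excess I t f u = 0" by (simp add: arc_excess_def)
  then show False using frac_aug_arc_excess[OF assms] by simp
qed

context gnf_network
begin

lemma arc_excess_eq_excess:
  "arc_excess I t g w = excess I t (\<lambda>e. g (Fw e) - g (Bw e) / gain I e) w"
proof -
  let ?E = "edges_at I t"
  have out_arcs: "{a\<in>all_arcs I t. atail I a = w} = Fw ` {e\<in>?E. etail I e = w} \<union> Bw ` {e\<in>?E. ehead I e = w}"
   and in_arcs: "{a\<in>all_arcs I t. ahead I a = w} = Fw ` {e\<in>?E. ehead I e = w} \<union> Bw ` {e\<in>?E. etail I e = w}"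
    unfolding all_arcs_def by auto
  have out_sum: "(\<Sum>a\<in>{a\<in>all_arcs I t. atail I a = w}. g a) =
      (\<Sum>e\<in>{e\<in>?E. etail I e = w}. g (Fw e)) + (\<Sum>e\<in>{e\<in>?E. ehead I e = w}. g (Bw e))"
    unfolding out_arcs using finite_edges_at
    by (subst sum.union_disjoint) (auto simp: sum.reindex inj_on_def)
  have in_sum: "(\<Sum>a\<in>{a\<in>all_arcs I t. ahead I a = w}. arc_gain I a * g a) =
      (\<Sum>e\<in>{e\<in>?E. ehead I e = w}. gain I e * g (Fw e)) + (\<Sum>e\<in>{e\<in>?E. etail I e = w}. g (Bw e) / gain I e)"
    unfolding in_arcs using finite_edges_at
    by (subst sum.union_disjoint) (auto simp: sum.reindex inj_on_def)
  have "e \<in> ?E \<Longrightarrow> gain I e \<noteq> 0" for e using gain_pos edges_at_subset by fastforce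
  then have "(\<Sum>e\<in>{e\<in>?E. ehead I e = w}. gain I e * (g (Fw e) - g (Bw e) / gain I e)) =
     (\<Sum>e\<in>{e\<in>?E. ehead I e = w}. gain I e * g (Fw e)) - (\<Sum>e\<in>{e\<in>?E. ehead I e = w}. g (Bw e))"
    unfolding sum_subtractf[symmetric] by (intro sum.cong) (auto simp: right_diff_distrib)
  then show ?thesis
    unfolding arc_excess_def excess_def out_sum in_sum by (simp add: sum_subtractf)
qed

lemma excess_augment:
  "excess I t (augment I x f \<theta>) w = excess I t x w + \<theta> * arc_excess I t f w"
proof -
  have aug: "augment I x f \<theta> = (\<lambda>e. x e + \<theta> * (f (Fw e) - f (Bw e) / gain I e))"
    unfolding augment_def by (simp add: algebra_simps)
  show ?thesis
    unfolding aug arc_excess_eq_excess excess_add_scaled ..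
qed

lemma aug_cost_nonneg: "(\<And>a. 0 \<le> f a) \<Longrightarrow> 0 \<le> aug_cost I t f"
  unfolding aug_cost_def by (intro sum_nonneg mult_nonneg_nonneg arc_cost_nonneg)

lemma aug_cost_aug_path_nonneg: "aug_path I t x u f \<Longrightarrow> 0 \<le> aug_cost I t f"
  by (intro aug_cost_nonneg aug_path_nonneg)

lemma height_le:
  assumes "aug_path I t x u g"
  shows "height I t x u \<le> aug_cost I t g"
  unfolding height_def
proof (rule cInf_lower)
  show "bdd_below (aug_cost I t ` {f. aug_path I t x u f})"
  proof (rule bdd_belowI)
    fix c assume "c \<in> aug_cost I t ` {f. aug_path I t x u f}"
    then show "0 \<le> c" using aug_cost_aug_path_nonneg by blast
  qed
qed (use assms in blast)

end

section \<open>Flows along walks\<close>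

definition walk_flow :: "(nat \<Rightarrow> 'e arc) \<Rightarrow> nat \<Rightarrow> (nat \<Rightarrow> real) \<Rightarrow> 'e arc \<Rightarrow> real" where
  "walk_flow q n \<kappa> a = (\<Sum>i<n. if q i = a then \<kappa> i else 0)"

definition path_gain :: "('v,'e) gnf \<Rightarrow> (nat \<Rightarrow> 'e arc) \<Rightarrow> nat \<Rightarrow> real" where
  "path_gain I q i = (\<Prod>l<i. arc_gain I (q l))"

lemma path_gain_0 [simp]: "path_gain I q 0 = 1"
  unfolding path_gain_def by simp

lemma path_gain_Suc: "path_gain I q (Suc i) = arc_gain I (q i) * path_gain I q i"
  unfolding path_gain_def by (simp add: mult.commute)

lemma sum_walk_flow:
  assumes "q ` {..<n} \<subseteq> A" "finite A"
  shows "(\<Sum>a\<in>{a\<in>A. P a}. h a * walk_flow q n \<kappa> a) = (\<Sum>i<n. if P (q i) then h (q i) * \<kappa> i else 0)"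
proof -
  have "(\<Sum>a\<in>{a\<in>A. P a}. h a * walk_flow q n \<kappa> a)
      = (\<Sum>i<n. \<Sum>a\<in>{a\<in>A. P a}. if q i = a then h a * \<kappa> i else 0)"
    unfolding walk_flow_def sum_distrib_left by (subst sum.swap) (auto intro!: sum.cong)
  also have "\<dots> = (\<Sum>i<n. if P (q i) then h (q i) * \<kappa> i else 0)"
    using assms by (intro sum.cong refl) (auto simp: sum.delta')
  finally show ?thesis .
qed

lemma walk_flow_nonneg: "(\<And>i. i < n \<Longrightarrow> 0 \<le> \<kappa> i) \<Longrightarrow> 0 \<le> walk_flow q n \<kappa> a"
  unfolding walk_flow_def by (intro sum_nonneg) auto

lemma supp_walk_flow:
  assumes "\<And>i. i < n \<Longrightarrow> 0 \<le> \<kappa> i"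
  shows "supp (walk_flow q n \<kappa>) = q ` {i. i < n \<and> 0 < \<kappa> i}"
proof -
  have "0 < walk_flow q n \<kappa> a \<longleftrightarrow> (\<exists>i<n. q i = a \<and> 0 < \<kappa> i)" for a
  proof -
    have "walk_flow q n \<kappa> a = 0 \<longleftrightarrow> (\<forall>i<n. (if q i = a then \<kappa> i else 0) = 0)"
      unfolding walk_flow_def using assms by (subst sum_nonneg_eq_0_iff) auto
    then show ?thesis using walk_flow_nonneg[of n \<kappa> q a] assms
      by (auto simp: order_less_le split: if_splits)
  qed
  then show ?thesis unfolding supp_def by auto
qed

lemma sum_if_inj_eq:
  fixes p :: "nat \<Rightarrow> 'v"
  assumes "inj_on p {..<n}" "m < n"
  shows "(\<Sum>i<n. if p i = p m then c i else 0) = c m"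
proof -
  have "(\<Sum>i<n. if p i = p m then c i else 0) = (\<Sum>i<n. if i = m then c i else 0)"
    using assms by (intro sum.cong refl) (auto dest: inj_onD)
  also have "\<dots> = c m" using assms(2) by simp
  finally show ?thesis .
qed

lemma sum_if_Suc_inj_eq:
  assumes "inj_on p {..<n}" "m < n"
  shows "(\<Sum>i<n. if p (Suc i) = p m then c i else 0) =
     (if m = 0 then 0 else c (m - 1)) + (if p n = p m then c (n - 1) else 0)"
proof -
  obtain n' where n: "n = Suc n'" using assms(2) by (cases n) auto
  have "(\<Sum>i<n'. if p (Suc i) = p m then c i else 0) = (\<Sum>i<n'. if Suc i = m then c i else 0)"
    using assms n by (intro sum.cong refl) (auto dest: inj_onD)
  also have "\<dots> = (if m = 0 then 0 else c (m - 1))"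
    using assms n by (cases m) auto
  finally show ?thesis unfolding n by simp
qed

lemma walk_upt:
  assumes "\<forall>i<n. atail I (q i) = p i \<and> ahead I (q i) = p (Suc i)" "j \<le> k" "k \<le> n"
  shows "walk I (map p [j..<Suc k]) (map q [j..<k])"
  unfolding walk_def using assms by (simp del: upt_Suc add: nth_map_upt)

lemma aug_path_if_tailed_cycle_support:
  assumes j: "0 < j" "j < n" "p n = p j" and inj: "inj_on p {..<n}" and no_sink: "sink I \<notin> p ` {..<n}"
    and walk: "\<forall>i<n. atail I (q i) = p i \<and> ahead I (q i) = p (Suc i)"
    and "frac_aug I t x (p 0) f" and supp: "supp f = q ` {..<n}"
  shows "aug_path I t x (p 0) f"
proof -
  let ?cs = "map p [j..<n]" and ?ps = "map p [0..<Suc j]"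
  have "?cs @ [hd ?cs] = map p [j..<Suc n]" using j by (simp add: hd_map upt_conv_Cons)
  then have cycle: "walk I (?cs @ [hd ?cs]) (map q [j..<n])" using walk_upt[OF walk, of j n] j by simp
  have path: "walk I ?ps (map q [0..<j])" using walk_upt[OF walk, of 0 j] j by simp
  have "distinct ?cs" "distinct ?ps"
    using j by (auto simp del: upt_Suc simp: distinct_map intro: inj_on_subset[OF inj])
  moreover have "p 0 \<notin> set ?cs" "set (butlast ?ps) \<inter> set ?cs = {}"
    using j inj by (auto simp: map_butlast[symmetric] dest: inj_onD)
  moreover have "?cs \<noteq> []" "sink I \<notin> set ?cs" "hd ?ps = p 0" "last ?ps \<in> set ?cs"
    using j no_sink by (auto simp del: upt_Suc simp: hd_map last_map)
  moreover have "supp f = set (map q [j..<n]) \<union> set (map q [0..<j])"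
    unfolding supp using j by (auto simp: image_iff) (metis atLeastLessThan_iff le0 not_le)
  ultimately show ?thesis
    using assms(7) cycle path unfolding aug_path_def
    by (intro conjI disjI2 exI[of _ ?cs] exI[of _ "map q [j..<n]"] exI[of _ ?ps]
        exI[of _ "map q [0..<j]"]) simp_all
qed

lemma aug_path_if_lasso_support:
  assumes "0 < n" and inj: "inj_on p {..<n}" and no_sink: "sink I \<notin> p ` {..<n}"
    and walk: "\<forall>i<n. atail I (q i) = p i \<and> ahead I (q i) = p (Suc i)"
    and ends: "p n = sink I \<or> (\<exists>j<n. p n = p j)"
    and "frac_aug I t x (p 0) f" and supp: "supp f = q ` {..<n}"
  shows "aug_path I t x (p 0) f"
proof -
  consider "p n = sink I" | "p n = p 0" | j where "0 < j" "j < n" "p n = p j"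
    using ends by (metis gr0I)
  then show ?thesis
  proof cases
    case 1
    let ?vs = "map p [0..<Suc n]"
    have "distinct ?vs"
      using inj no_sink 1 by (simp del: upt_Suc add: distinct_map lessThan_Suc atLeast0LessThan)
    moreover have "last ?vs = sink I" using 1 by (simp del: upt_Suc add: last_map)
    ultimately show ?thesis
      using assms walk_upt[OF walk, of 0 n] unfolding aug_path_def
      by (intro conjI disjI1 exI[of _ ?vs] exI[of _ "map q [0..<n]"])
        (simp_all del: upt_Suc add: hd_map atLeast0LessThan)
  next
    case 2
    let ?vs = "map p [0..<n]"
    have "?vs @ [hd ?vs] = map p [0..<Suc n]" using 2 \<open>0 < n\<close> by (simp add: hd_map)
    then show ?thesis
      using assms walk_upt[OF walk, of 0 n] unfolding aug_path_def
      by (intro conjI disjI2 disjI1 exI[of _ ?vs] exI[of _ "map q [0..<n]"])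
        (auto simp: hd_map distinct_map atLeast0LessThan)
  next
    case 3
    then show ?thesis using aug_path_if_tailed_cycle_support assms by blast
  qed
qed

context gnf_network
begin

lemma arc_excess_walk_flow:
  assumes arcs: "\<forall>i<n. q i \<in> all_arcs I t"
    and walk: "\<forall>i<n. atail I (q i) = p i \<and> ahead I (q i) = p (Suc i)"
  shows "arc_excess I t (walk_flow q n \<kappa>) w =
     (\<Sum>i<n. if p i = w then \<kappa> i else 0) - (\<Sum>i<n. if p (Suc i) = w then arc_gain I (q i) * \<kappa> i else 0)"
proof -
  have "q ` {..<n} \<subseteq> all_arcs I t" using arcs by blast
  note sums = sum_walk_flow[OF this finite_all_arcs]
  have "(\<Sum>i<n. if atail I (q i) = w then \<kappa> i else 0) = (\<Sum>i<n. if p i = w then \<kappa> i else 0)"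
   and "(\<Sum>i<n. if ahead I (q i) = w then arc_gain I (q i) * \<kappa> i else 0)
      = (\<Sum>i<n. if p (Suc i) = w then arc_gain I (q i) * \<kappa> i else 0)"
    using walk by (auto intro: sum.cong)
  then show ?thesis
    unfolding arc_excess_def using sums[where P="\<lambda>a. atail I a = w" and h="\<lambda>_. 1"]
      sums[where P="\<lambda>a. ahead I a = w"]
    by simp
qed

lemma arc_excess_walk_flow_off_walk:
  assumes "\<forall>i<n. q i \<in> all_arcs I t" "\<forall>i<n. atail I (q i) = p i \<and> ahead I (q i) = p (Suc i)"
    and "w \<notin> p ` {..n}"
  shows "arc_excess I t (walk_flow q n \<kappa>) w = 0"
proof -
  have "(\<Sum>i<n. if p i = w then \<kappa> i else 0) = 0"
    and "(\<Sum>i<n. if p (Suc i) = w then arc_gain I (q i) * \<kappa> i else 0) = 0"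
    using assms(3) by (auto intro!: sum.neutral)
  then show ?thesis unfolding arc_excess_walk_flow[OF assms(1,2)] by simp
qed

lemma path_gain_pos: "\<forall>i<n. q i \<in> all_arcs I t \<Longrightarrow> i \<le> n \<Longrightarrow> 0 < path_gain I q i"
  unfolding path_gain_def by (intro prod_pos) (metis arc_gain_pos lessThan_iff less_le_trans)

(* Weighting by path_gain makes the flow leaving p m equal to the flow arriving there,
   so excess arises only where c jumps and where the walk returns to p n. *)
lemma arc_excess_lasso_flow:
  assumes arcs: "\<forall>i<n. q i \<in> all_arcs I t"
    and walk: "\<forall>i<n. atail I (q i) = p i \<and> ahead I (q i) = p (Suc i)"
    and inj: "inj_on p {..<n}" and "m < n"
  shows "arc_excess I t (walk_flow q n (\<lambda>i. path_gain I q i * c i)) (p m) =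
     path_gain I q m * (c m - (if m = 0 then 0 else c (m - 1)))
     - (if p n = p m then path_gain I q n * c (n - 1) else 0)"
proof -
  obtain n' where n: "n = Suc n'" using \<open>m < n\<close> by (cases n) auto
  show ?thesis
    unfolding arc_excess_walk_flow[OF arcs walk] sum_if_inj_eq[OF inj \<open>m < n\<close>]
      sum_if_Suc_inj_eq[OF inj \<open>m < n\<close>]
    using n by (cases m) (simp_all add: path_gain_Suc algebra_simps)
qed

lemma lasso_flow_conservation:
  assumes arcs: "\<forall>i<n. q i \<in> all_arcs I t"
    and walk: "\<forall>i<n. atail I (q i) = p i \<and> ahead I (q i) = p (Suc i)"
    and inj: "inj_on p {..<n}" and "0 < n" and no_sink: "sink I \<notin> p ` {..<n}"
    and j: "p n = sink I \<and> j = n \<or> j < n \<and> p n = p j \<and> r * (path_gain I q j - path_gain I q n) = path_gain I q j"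
    and "w \<noteq> sink I"
  shows "arc_excess I t (walk_flow q n (\<lambda>i. path_gain I q i * (if j \<le> i then r else 1))) w
    = (if w = p 0 then 1 else 0)"
proof (cases "w \<in> p ` {..<n}")
  case True
  then obtain m where m: "m < n" "w = p m" by blast
  have "p m \<noteq> sink I" using no_sink m(1) by (metis image_eqI lessThan_iff)
  then have "p n = p m \<longleftrightarrow> m = j \<and> j < n" using j m(1) inj by (auto dest: inj_onD)
  then show ?thesis
    unfolding m(2) arc_excess_lasso_flow[OF arcs walk inj m(1)]
    using j m(1) inj \<open>0 < n\<close> by (auto simp: algebra_simps dest: inj_onD)
next
  case False
  have "p n \<in> p ` {..<n} \<or> p n = sink I" using j by auto
  then have "w \<notin> p ` {..n}"
    using False \<open>w \<noteq> sink I\<close> by (auto simp: lessThan_Suc_atMost[symmetric] lessThan_Suc)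
  then show ?thesis using False \<open>0 < n\<close> arc_excess_walk_flow_off_walk[OF arcs walk] by auto
qed

lemma aug_path_of_walk:
  assumes "0 < n" and inner: "\<forall>i<n. p i \<in> inner_verts t" and inj: "inj_on p {..<n}"
    and res: "\<forall>i<n. q i \<in> res_arcs I t x"
    and walk: "\<forall>i<n. atail I (q i) = p i \<and> ahead I (q i) = p (Suc i)"
    and ends: "p n = sink I \<or> (\<exists>j<n. p n = p j \<and> path_gain I q n < path_gain I q j)"
  obtains f where "aug_path I t x (p 0) f" "supp f = q ` {..<n}"
proof -
  have arcs: "\<forall>i<n. q i \<in> all_arcs I t" using res res_arcs_subset_all_arcs by blast
  note gain_pos = path_gain_pos[OF arcs]
  have no_sink: "sink I \<notin> p ` {..<n}" using inner by auto
  \<comment> \<open>On a lossy cycle the flow is scaled up by r so that the cycle absorbs exactly what enters it.\<close>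
  obtain j r where "0 < r"
    and j: "p n = sink I \<and> j = n \<or> j < n \<and> p n = p j \<and> r * (path_gain I q j - path_gain I q n) = path_gain I q j"
  proof (cases "p n = sink I")
    case True
    then show ?thesis by (intro that[of 1 n]) auto
  next
    case False
    then obtain j where "j < n" "p n = p j" "path_gain I q n < path_gain I q j" using ends by blast
    then show ?thesis
      using gain_pos[of j] gain_pos[of n]
      by (intro that[of "path_gain I q j / (path_gain I q j - path_gain I q n)" j]) auto
  qed
  define f where "f = walk_flow q n (\<lambda>i. path_gain I q i * (if j \<le> i then r else 1))"
  have nonneg: "0 \<le> f a" for a
    unfolding f_def using gain_pos \<open>0 < r\<close> by (intro walk_flow_nonneg) (simp add: less_imp_le)
  have supp: "supp f = q ` {..<n}"
    unfolding f_def using gain_pos \<open>0 < r\<close> by (subst supp_walk_flow) (auto simp: less_imp_le)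
  have "a \<in> res_arcs I t x" if "f a \<noteq> 0" for a
  proof -
    have "a \<in> supp f" using that nonneg[of a] by (simp add: supp_def)
    then show ?thesis using supp res by auto
  qed
  moreover have "arc_excess I t f w = (if w = p 0 then 1 else 0)" if "w \<in> inner_verts t" for w
    unfolding f_def using lasso_flow_conservation[OF arcs walk inj \<open>0 < n\<close> no_sink j] that by simp
  ultimately have "frac_aug I t x (p 0) f"
    using nonneg unfolding frac_aug_def arc_excess_def by blast
  then have "aug_path I t x (p 0) f"
    using aug_path_if_lasso_support[OF \<open>0 < n\<close> inj no_sink walk] j supp by blast
  then show ?thesis using that supp by blast
qed

lemma gainy_cycle_flow:
  assumes arcs: "\<forall>i<n. q i \<in> all_arcs I t"
    and walk: "\<forall>i<n. atail I (q i) = p i \<and> ahead I (q i) = p (Suc i)"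
    and inj: "inj_on p {..<n}"
    and j: "j < n" "p n = p j" "path_gain I q j \<le> path_gain I q n"
  defines "c \<equiv> walk_flow q n (\<lambda>i. path_gain I q i * (if j \<le> i then 1 else 0))"
  shows "arc_excess I t c w \<le> 0" "supp c = q ` {j..<n}" "0 \<le> c a"
proof -
  note gain_pos = path_gain_pos[OF arcs]
  show "supp c = q ` {j..<n}"
    unfolding c_def using gain_pos by (subst supp_walk_flow) (auto simp: less_imp_le)
  show "0 \<le> c a"
    unfolding c_def using gain_pos by (intro walk_flow_nonneg) (simp add: less_imp_le)
  show "arc_excess I t c w \<le> 0"
  proof (cases "w \<in> p ` {..<n}")
    case True
    then obtain m where m: "m < n" "w = p m" by blast
    have "p n = p m \<longleftrightarrow> m = j" using j m inj by (auto dest: inj_onD)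
    then show ?thesis
      unfolding c_def m(2) arc_excess_lasso_flow[OF arcs walk inj m(1)] using j by auto
  next
    case False
    then have "w \<notin> p ` {..n}" using j by (auto simp: lessThan_Suc_atMost[symmetric] lessThan_Suc)
    then show ?thesis unfolding c_def using arc_excess_walk_flow_off_walk[OF arcs walk] by simp
  qed
qed

lemma aug_path_exists:
  assumes "u \<in> inner_verts t"
  shows "\<exists>f. aug_path I t x u f"
proof -
  have u: "u \<in> verts I - {sink I}" using assms unfolding verts_at_def by auto
  note d = dummy_edge[OF u]
  have "dummy u \<in> edges_at I t" using d assms unfolding edges_at_def verts_at_def by auto
  then have res: "Fw (dummy u) \<in> res_arcs I t x" using d unfolding res_arcs_def by auto
  define p :: "nat \<Rightarrow> 'v" where "p i = (if i = 0 then u else sink I)" for i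
  obtain f where "aug_path I t x (p 0) f"
  proof (rule aug_path_of_walk[of 1 p t "\<lambda>_. Fw (dummy u)" x])
    show "0 < (1::nat)" by simp
    show "\<forall>i<1. p i \<in> inner_verts t" using assms by (simp add: p_def)
    show "inj_on p {..<1}" by (rule inj_onI) simp
    show "\<forall>i<1. Fw (dummy u) \<in> res_arcs I t x" using res by simp
    show "\<forall>i<1. atail I (Fw (dummy u)) = p i \<and> ahead I (Fw (dummy u)) = p (Suc i)"
      using d by (simp add: p_def)
    show "p 1 = sink I \<or> (\<exists>j<1. p 1 = p j \<and> path_gain I (\<lambda>_. Fw (dummy u)) 1 < path_gain I (\<lambda>_. Fw (dummy u)) j)"
      by (simp add: p_def)
  qed (erule that)
  moreover have "p 0 = u" by (simp add: p_def)
  ultimately show ?thesis by auto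
qed

lemma height_nonneg:
  assumes "u \<in> inner_verts t"
  shows "0 \<le> height I t x u"
proof -
  obtain g where "aug_path I t x u g" using aug_path_exists[OF assms] by blast
  show ?thesis unfolding height_def
  proof (rule cInf_greatest)
    show "aug_cost I t ` {f. aug_path I t x u f} \<noteq> {}" using \<open>aug_path I t x u g\<close> by blast
  next
    fix c assume "c \<in> aug_cost I t ` {f. aug_path I t x u f}"
    then show "0 \<le> c" using aug_cost_aug_path_nonneg by blast
  qed
qed

end

section \<open>Peeling a residual flow with nonnegative excesses\<close>

lemma first_exit_or_repeat:
  fixes p :: "nat \<Rightarrow> 'v"
  assumes "finite V" "p 0 \<in> V"
  obtains n where "0 < n" "\<forall>i<n. p i \<in> V" "inj_on p {..<n}" "p n \<notin> V \<or> p n \<in> p ` {..<n}"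
proof -
  define stop where "stop i \<longleftrightarrow> p i \<notin> V \<or> p i \<in> p ` {..<i}" for i
  have stop_repeat: "stop b" if "a < b" "p a = p b" for a b
    using that unfolding stop_def by (metis image_eqI lessThan_iff)
  have inj: "inj_on p {..<k}" if "\<forall>i<k. \<not> stop i" for k
  proof (rule inj_onI, rule ccontr)
    fix a b assume "a \<in> {..<k}" "b \<in> {..<k}" "p a = p b" "a \<noteq> b"
    then show False using that stop_repeat by (metis lessThan_iff linorder_neqE_nat)
  qed
  have "\<exists>i. stop i"
  proof (rule ccontr)
    assume no_stop: "\<nexists>i. stop i"
    then have "inj_on p {..<Suc (card V)}" using inj by blast
    moreover have "p ` {..<Suc (card V)} \<subseteq> V" using no_stop unfolding stop_def by blast
    ultimately show False using card_inj_on_le[OF _ _ \<open>finite V\<close>] by fastforce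
  qed
  define n where "n = (LEAST i. stop i)"
  have "stop n" unfolding n_def using \<open>\<exists>i. stop i\<close> by (rule LeastI_ex)
  have not_stop: "\<not> stop i" if "i < n" for i
    using not_less_Least[OF that[unfolded n_def]] .
  have "0 < n" using \<open>stop n\<close> \<open>p 0 \<in> V\<close> unfolding stop_def by (auto intro: gr0I)
  then show ?thesis
    using that[of n] \<open>stop n\<close> not_stop inj unfolding stop_def by blast
qed

lemma walk_to_exit_or_repeat:
  fixes tail head :: "'a \<Rightarrow> 'v"
  assumes "finite V" "u \<in> V" "z \<notin> V"
    and out: "\<And>v. v \<in> V \<Longrightarrow> v = u \<or> (\<exists>a\<in>S. head a = v) \<Longrightarrow> \<exists>a\<in>S. tail a = v"
    and heads: "\<And>a. a \<in> S \<Longrightarrow> tail a \<in> V \<Longrightarrow> head a \<in> V \<or> head a = z"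
  obtains n p q where "0 < n" "p 0 = u" "\<forall>i<n. p i \<in> V" "inj_on p {..<n}" "\<forall>i<n. q i \<in> S"
    "\<forall>i<n. tail (q i) = p i \<and> head (q i) = p (Suc i)" "p n = z \<or> (\<exists>j<n. p n = p j)"
proof -
  have "\<forall>v\<in>{v\<in>V. v = u \<or> (\<exists>a\<in>S. head a = v)}. \<exists>a. a \<in> S \<and> tail a = v"
    using out by blast
  from bchoice[OF this] obtain nx
    where "\<forall>v\<in>{v\<in>V. v = u \<or> (\<exists>a\<in>S. head a = v)}. nx v \<in> S \<and> tail (nx v) = v" ..
  then have nx: "nx v \<in> S \<and> tail (nx v) = v" if "v \<in> V" "v = u \<or> (\<exists>a\<in>S. head a = v)" for v
    using that by blast
  define p where "p i = ((\<lambda>v. head (nx v)) ^^ i) u" for i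
  have p_0: "p 0 = u" and p_Suc: "p (Suc i) = head (nx (p i))" for i
    unfolding p_def by simp_all
  obtain n where n: "0 < n" "\<forall>i<n. p i \<in> V" "inj_on p {..<n}" "p n \<notin> V \<or> p n \<in> p ` {..<n}"
    using first_exit_or_repeat[OF \<open>finite V\<close>] p_0 \<open>u \<in> V\<close> by metis
  have arc: "nx (p i) \<in> S \<and> tail (nx (p i)) = p i" if "i < n" for i
    using that
  proof (induction i)
    case 0
    then show ?case using nx \<open>u \<in> V\<close> p_0 by simp
  next
    case (Suc i)
    then have "p (Suc i) \<in> V" "nx (p i) \<in> S" "head (nx (p i)) = p (Suc i)"
      using n(2) p_Suc by auto
    then show ?case using nx[of "p (Suc i)"] by blast
  qed
  show ?thesis
  proof (rule that[of n p "\<lambda>i. nx (p i)"])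
    show "p n = z \<or> (\<exists>j<n. p n = p j)"
    proof (cases "p n \<in> V")
      case True
      then show ?thesis using n(4) by auto
    next
      case False
      obtain m where m: "n = Suc m" using \<open>0 < n\<close> gr0_implies_Suc by blast
      then show ?thesis using heads[of "nx (p m)"] arc[of m] n(2) p_Suc False by auto
    qed
  qed (use n p_0 arc p_Suc in auto)
qed

definition nonneg_excess_flow :: "('v,'e) gnf \<Rightarrow> nat \<Rightarrow> ('e \<Rightarrow> real) \<Rightarrow> ('e arc \<Rightarrow> real) \<Rightarrow> bool" where
  "nonneg_excess_flow I t x f \<longleftrightarrow> (\<forall>a. 0 \<le> f a) \<and> supp f \<subseteq> res_arcs I t x \<and>
     (\<forall>w\<in>verts_at I t - {sink I}. 0 \<le> arc_excess I t f w)"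

definition height_weighted_excess :: "('v,'e) gnf \<Rightarrow> nat \<Rightarrow> ('e \<Rightarrow> real) \<Rightarrow> ('e arc \<Rightarrow> real) \<Rightarrow> real" where
  "height_weighted_excess I t x f = (\<Sum>w\<in>verts_at I t - {sink I}. arc_excess I t f w * height I t x w)"

(* Peeling either empties an arc of the support or, without enlarging the support,
   removes a vertex from those of positive excess. *)
definition peel_order :: "('v,'e) gnf \<Rightarrow> nat \<Rightarrow> (('e arc \<Rightarrow> real) \<times> ('e arc \<Rightarrow> real)) set" where
  "peel_order I t = (\<lambda>f. card (supp f)) <*mlex*> Wellfounded.measure (\<lambda>f. card {w\<in>verts_at I t - {sink I}. 0 < arc_excess I t f w})"

lemma wf_peel_order: "wf (peel_order I t)"
  unfolding peel_order_def by (intro wf_mlex wf_measure)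

lemma height_weighted_excess_diff:
  "height_weighted_excess I t x (\<lambda>a. f a - c * g a) = height_weighted_excess I t x f - c * height_weighted_excess I t x g"
  unfolding height_weighted_excess_def arc_excess_diff
  by (simp add: sum_subtractf sum_distrib_left algebra_simps)

lemma max_scaling:
  assumes "finite (supp g)" "supp g \<noteq> {}" "supp g \<subseteq> supp f" "\<And>a. 0 \<le> g a" "\<And>a. 0 \<le> f a"
  obtains \<mu> where "0 < \<mu>" "\<And>a. \<mu> * g a \<le> f a" "\<exists>a\<in>supp g. \<mu> * g a = f a"
proof -
  define \<mu> where "\<mu> = Min ((\<lambda>a. f a / g a) ` supp g)"
  have "\<mu> \<in> (\<lambda>a. f a / g a) ` supp g" unfolding \<mu>_def using assms by (intro Min_in) auto
  then obtain a0 where a0: "a0 \<in> supp g" "\<mu> = f a0 / g a0" by blast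
  have le: "\<mu> \<le> f a / g a" if "a \<in> supp g" for a
    unfolding \<mu>_def using assms that by (intro Min_le) auto
  show ?thesis
  proof (rule that)
    show "0 < \<mu>" using a0 assms(3) by (auto simp: supp_def)
    show "\<mu> * g a \<le> f a" for a
    proof (cases "a \<in> supp g")
      case True
      then show ?thesis using le[OF True] by (simp add: supp_def pos_le_divide_eq)
    next
      case False
      then have "g a = 0" using assms(4)[of a] by (simp add: supp_def)
      then show ?thesis using assms(5) by simp
    qed
    show "\<exists>a\<in>supp g. \<mu> * g a = f a" using a0 by (auto simp: supp_def)
  qed
qed

lemma peel_order_if_arc_saturated:
  assumes "finite (supp f)" "supp (\<lambda>a. f a - \<mu> * g a) \<subseteq> supp f"
    and "a \<in> supp f" "\<mu> * g a = f a"
  shows "(\<lambda>a. f a - \<mu> * g a, f) \<in> peel_order I t"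
proof -
  have "a \<notin> supp (\<lambda>a. f a - \<mu> * g a)" using assms(4) by (simp add: supp_def)
  then have "supp (\<lambda>a. f a - \<mu> * g a) \<subset> supp f" using assms(2,3) by blast
  then have "card (supp (\<lambda>a. f a - \<mu> * g a)) < card (supp f)"
    by (rule psubset_card_mono[OF assms(1)])
  then show ?thesis unfolding peel_order_def by (rule mlex_less[where f = "\<lambda>f. card (supp f)"])
qed

context gnf_network
begin

lemma finite_supp: "supp f \<subseteq> res_arcs I t x \<Longrightarrow> finite (supp f)"
  using finite_all_arcs res_arcs_subset_all_arcs by (meson finite_subset order_trans)

lemma peel:
  assumes f: "nonneg_excess_flow I t x f" and g: "\<And>a. 0 \<le> g a" "supp g \<subseteq> supp f"
    and \<theta>: "0 < \<theta>" "\<And>a. \<theta> * g a \<le> f a"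
    and exc: "\<And>w. w \<in> inner_verts t \<Longrightarrow> 0 \<le> arc_excess I t f w - \<theta> * arc_excess I t g w"
    and g_bound: "height_weighted_excess I t x g \<le> aug_cost I t g"
  defines "f' \<equiv> \<lambda>a. f a - \<theta> * g a"
  shows "nonneg_excess_flow I t x f'" "supp f' \<subseteq> supp f"
    and "height_weighted_excess I t x f - aug_cost I t f \<le> height_weighted_excess I t x f' - aug_cost I t f'"
proof -
  show "supp f' \<subseteq> supp f"
    unfolding f'_def supp_def using g(1) \<theta>(1) by (auto intro: le_less_trans[rotated] mult_nonneg_nonneg)
  then show "nonneg_excess_flow I t x f'"
    using f \<theta>(2) exc unfolding nonneg_excess_flow_def f'_def arc_excess_diff by auto
  show "height_weighted_excess I t x f - aug_cost I t f \<le> height_weighted_excess I t x f' - aug_cost I t f'"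
    unfolding f'_def height_weighted_excess_diff aug_cost_diff using g_bound \<theta>(1)
    by (simp add: algebra_simps mult_left_mono)
qed

lemma peel_order_if_excess_vanishes:
  assumes "finite (supp f)" "supp f' \<subseteq> supp f"
    and le: "\<And>w. w \<in> inner_verts t \<Longrightarrow> arc_excess I t f' w \<le> arc_excess I t f w"
    and u: "u \<in> inner_verts t" "0 < arc_excess I t f u" "arc_excess I t f' u \<le> 0"
  shows "(f', f) \<in> peel_order I t"
proof -
  have "{w\<in>inner_verts t. 0 < arc_excess I t f' w} \<subseteq> {w\<in>inner_verts t. 0 < arc_excess I t f w}"
    using le by (blast intro: less_le_trans)
  moreover have "u \<notin> {w\<in>inner_verts t. 0 < arc_excess I t f' w}" using u(3) by simp
  ultimately have "{w\<in>inner_verts t. 0 < arc_excess I t f' w} \<subset> {w\<in>inner_verts t. 0 < arc_excess I t f w}"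
    using u(1,2) by blast
  then have "card {w\<in>inner_verts t. 0 < arc_excess I t f' w} < card {w\<in>inner_verts t. 0 < arc_excess I t f w}"
    using finite_inner_verts by (intro psubset_card_mono) simp
  moreover have "card (supp f') \<le> card (supp f)" by (rule card_mono[OF assms(1,2)])
  ultimately show ?thesis
    unfolding peel_order_def by (intro mlex_leq[where f = "\<lambda>f. card (supp f)"]) simp_all
qed

lemma height_weighted_excess_aug_path:
  assumes "aug_path I t x u g" "u \<in> inner_verts t"
  shows "height_weighted_excess I t x g = height I t x u"
proof -
  have "arc_excess I t g w = (if w = u then 1 else 0)" if "w \<in> inner_verts t" for w
    using frac_aug_arc_excess[OF aug_path_frac_aug[OF assms(1)] that] .
  then have "height_weighted_excess I t x g = (\<Sum>w\<in>inner_verts t. if w = u then height I t x w else 0)"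
    unfolding height_weighted_excess_def by (intro sum.cong) simp_all
  then show ?thesis using assms(2) finite_inner_verts by simp
qed

lemma support_arc_leaves:
  assumes f: "nonneg_excess_flow I t x f" and v: "v \<in> inner_verts t"
    and enters: "0 < arc_excess I t f v \<or> (\<exists>a\<in>supp f. ahead I a = v)"
  shows "\<exists>a\<in>supp f. atail I a = v"
proof (rule ccontr)
  assume no_out: "\<not> (\<exists>a\<in>supp f. atail I a = v)"
  let ?In = "\<Sum>a\<in>{a\<in>all_arcs I t. ahead I a = v}. arc_gain I a * f a"
  have f0: "\<And>a. 0 \<le> f a" and supp: "supp f \<subseteq> all_arcs I t" and "0 \<le> arc_excess I t f v"
    using f v res_arcs_subset_all_arcs unfolding nonneg_excess_flow_def by blast+
  have "f a = 0" if "atail I a = v" for a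
  proof (rule ccontr)
    assume "f a \<noteq> 0"
    then have "a \<in> supp f" using f0[of a] by (simp add: supp_def)
    then show False using no_out that by blast
  qed
  then have "(\<Sum>a\<in>{a\<in>all_arcs I t. atail I a = v}. f a) = 0" by simp
  then have exc: "arc_excess I t f v = - ?In" unfolding arc_excess_def by simp
  have in_terms: "0 \<le> arc_gain I a * f a" if "a \<in> all_arcs I t" for a
    using arc_gain_pos[OF that] f0[of a] by simp
  from enters show False
  proof
    assume "0 < arc_excess I t f v"
    moreover have "0 \<le> ?In" using in_terms by (intro sum_nonneg) simp
    ultimately show False using exc by simp
  next
    assume "\<exists>a\<in>supp f. ahead I a = v"
    then obtain a where a: "a \<in> supp f" "ahead I a = v" by blast
    then have "0 < arc_gain I a * f a" using supp arc_gain_pos by (auto simp: supp_def)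
    also have "\<dots> \<le> ?In"
      using a supp in_terms finite_all_arcs by (intro member_le_sum) auto
    finally show False using exc \<open>0 \<le> arc_excess I t f v\<close> by simp
  qed
qed

lemma peel_aug_path:
  assumes f: "nonneg_excess_flow I t x f" and u: "u \<in> inner_verts t" "0 < arc_excess I t f u"
    and g: "aug_path I t x u g" "supp g \<subseteq> supp f"
  obtains f' where "nonneg_excess_flow I t x f'" "(f', f) \<in> peel_order I t"
    "height_weighted_excess I t x f - aug_cost I t f \<le> height_weighted_excess I t x f' - aug_cost I t f'"
proof -
  have f0: "\<And>a. 0 \<le> f a" and fin: "finite (supp f)"
    and f_exc: "\<And>w. w \<in> inner_verts t \<Longrightarrow> 0 \<le> arc_excess I t f w"
    using f finite_supp unfolding nonneg_excess_flow_def by auto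
  have g0: "\<And>a. 0 \<le> g a" using aug_path_nonneg[OF g(1)] .
  have g_exc: "arc_excess I t g w = (if w = u then 1 else 0)" if "w \<in> inner_verts t" for w
    using frac_aug_arc_excess[OF aug_path_frac_aug[OF g(1)] that] .
  have "supp g \<noteq> {}" using frac_aug_supp_nonempty[OF aug_path_frac_aug[OF g(1)] u(1)] .
  obtain \<mu> where \<mu>: "0 < \<mu>" "\<And>a. \<mu> * g a \<le> f a" and saturated: "\<exists>a\<in>supp g. \<mu> * g a = f a"
    using max_scaling[OF finite_subset[OF g(2) fin] \<open>supp g \<noteq> {}\<close> g(2) g0 f0] by blast
  \<comment> \<open>Stop early if the excess at u runs out before an arc of g is saturated.\<close>
  define \<theta> where "\<theta> = min \<mu> (arc_excess I t f u)"
  have \<theta>: "0 < \<theta>" "\<theta> \<le> arc_excess I t f u" using \<mu>(1) u(2) by (simp_all add: \<theta>_def)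
  have scaled: "\<theta> * g a \<le> f a" for a
    using \<mu>(2)[of a] g0[of a] mult_right_mono[of \<theta> \<mu> "g a"] by (simp add: \<theta>_def)
  have exc: "0 \<le> arc_excess I t f w - \<theta> * arc_excess I t g w" if "w \<in> inner_verts t" for w
    using g_exc[OF that] f_exc[OF that] \<theta>(2) by simp
  have bound: "height_weighted_excess I t x g \<le> aug_cost I t g"
    using height_le[OF g(1)] height_weighted_excess_aug_path[OF g(1) u(1)] by simp
  note peeled = peel[OF f g0 g(2) \<theta>(1) scaled exc bound]
  have "(\<lambda>a. f a - \<theta> * g a, f) \<in> peel_order I t"
  proof (cases "\<theta> = \<mu>")
    case True
    then show ?thesis using saturated g(2) peel_order_if_arc_saturated[OF fin peeled(2)] by blast
  next
    case False
    then have "\<theta> = arc_excess I t f u" by (simp add: \<theta>_def min_def split: if_splits)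
    then have "arc_excess I t (\<lambda>a. f a - \<theta> * g a) u \<le> 0"
      using g_exc[OF u(1)] by (simp add: arc_excess_diff)
    moreover have "arc_excess I t (\<lambda>a. f a - \<theta> * g a) w \<le> arc_excess I t f w"
      if "w \<in> inner_verts t" for w
      using g_exc[OF that] \<theta>(1) by (simp add: arc_excess_diff)
    ultimately show ?thesis using peel_order_if_excess_vanishes[OF fin peeled(2) _ u] by blast
  qed
  then show ?thesis using that peeled(1,3) by blast
qed

lemma peel_gainy_cycle:
  assumes f: "nonneg_excess_flow I t x f"
    and c: "\<And>a. 0 \<le> c a" "\<And>w. arc_excess I t c w \<le> 0" "supp c \<subseteq> supp f" "supp c \<noteq> {}"
  obtains f' where "nonneg_excess_flow I t x f'" "(f', f) \<in> peel_order I t"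
    "height_weighted_excess I t x f - aug_cost I t f \<le> height_weighted_excess I t x f' - aug_cost I t f'"
proof -
  have f0: "\<And>a. 0 \<le> f a" and fin: "finite (supp f)"
    and f_exc: "\<And>w. w \<in> inner_verts t \<Longrightarrow> 0 \<le> arc_excess I t f w"
    using f finite_supp unfolding nonneg_excess_flow_def by auto
  obtain \<mu> where \<mu>: "0 < \<mu>" "\<And>a. \<mu> * c a \<le> f a" and saturated: "\<exists>a\<in>supp c. \<mu> * c a = f a"
    using max_scaling[OF finite_subset[OF c(3) fin] c(4) c(3) c(1) f0] by blast
  have exc: "0 \<le> arc_excess I t f w - \<mu> * arc_excess I t c w" if "w \<in> inner_verts t" for w
    using f_exc[OF that] mult_nonneg_nonpos[OF less_imp_le[OF \<mu>(1)] c(2)[of w]] by linarith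
  have "height_weighted_excess I t x c \<le> 0"
    unfolding height_weighted_excess_def using c(2) height_nonneg
    by (intro sum_nonpos mult_nonpos_nonneg) auto
  then have bound: "height_weighted_excess I t x c \<le> aug_cost I t c"
    using aug_cost_nonneg[of c t, OF c(1)] by linarith
  note peeled = peel[OF f c(1) c(3) \<mu> exc bound]
  have "(\<lambda>a. f a - \<mu> * c a, f) \<in> peel_order I t"
    using saturated c(3) peel_order_if_arc_saturated[OF fin peeled(2)] by blast
  then show ?thesis using that peeled(1,3) by blast
qed

lemma exists_peel:
  assumes f: "nonneg_excess_flow I t x f" and u: "u \<in> inner_verts t" "0 < arc_excess I t f u"
  obtains f' where "nonneg_excess_flow I t x f'" "(f', f) \<in> peel_order I t"
    "height_weighted_excess I t x f - aug_cost I t f \<le> height_weighted_excess I t x f' - aug_cost I t f'"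
proof -
  have supp_res: "supp f \<subseteq> res_arcs I t x" using f unfolding nonneg_excess_flow_def by blast
  obtain n p q where walk: "0 < n" "p 0 = u" "\<forall>i<n. p i \<in> inner_verts t" "inj_on p {..<n}"
    "\<forall>i<n. q i \<in> supp f" "\<forall>i<n. atail I (q i) = p i \<and> ahead I (q i) = p (Suc i)"
    "p n = sink I \<or> (\<exists>j<n. p n = p j)"
  proof (rule walk_to_exit_or_repeat[of "inner_verts t" u "sink I" "supp f" "ahead I" "atail I"])
    show "\<exists>a\<in>supp f. atail I a = v" if "v \<in> inner_verts t" "v = u \<or> (\<exists>a\<in>supp f. ahead I a = v)" for v
      using support_arc_leaves[OF f that(1)] that(2) u(2) by blast
    show "ahead I a \<in> inner_verts t \<or> ahead I a = sink I" if "a \<in> supp f" for a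
      using arc_ends_in_verts_at(2) supp_res res_arcs_subset_all_arcs that by blast
    show "finite (inner_verts t)" by (rule finite_inner_verts)
  qed (use u that in simp_all)
  have res: "\<forall>i<n. q i \<in> res_arcs I t x" using walk(5) supp_res by blast
  then have arcs: "\<forall>i<n. q i \<in> all_arcs I t" using res_arcs_subset_all_arcs by blast
  have walk_supp: "q ` {..<n} \<subseteq> supp f" using walk(5) by blast
  show ?thesis
  proof (cases "p n = sink I \<or> (\<exists>j<n. p n = p j \<and> path_gain I q n < path_gain I q j)")
    case True
    obtain g where g: "aug_path I t x (p 0) g" "supp g = q ` {..<n}"
      by (rule aug_path_of_walk[OF walk(1,3,4) res walk(6) True])
    then have "aug_path I t x u g" "supp g \<subseteq> supp f" using walk(2) walk_supp by simp_all
    then show ?thesis using that by (rule peel_aug_path[OF f u])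
  next
    case False
    then obtain j where j: "j < n" "p n = p j" "path_gain I q j \<le> path_gain I q n"
      using walk(7) by (auto simp: not_less)
    note cycle = gainy_cycle_flow[OF arcs walk(6) walk(4) j]
    have "supp (walk_flow q n (\<lambda>i. path_gain I q i * (if j \<le> i then 1 else 0))) \<subseteq> supp f"
      using cycle(2) walk_supp by auto
    moreover have "supp (walk_flow q n (\<lambda>i. path_gain I q i * (if j \<le> i then 1 else 0))) \<noteq> {}"
      using cycle(2) j(1) by auto
    ultimately show ?thesis using that by (rule peel_gainy_cycle[OF f cycle(3) cycle(1)])
  qed
qed

theorem height_weighted_excess_le_aug_cost:
  "nonneg_excess_flow I t x f \<Longrightarrow> height_weighted_excess I t x f \<le> aug_cost I t f"
proof (induction f rule: wf_induct_rule[OF wf_peel_order[of I t], case_names less])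
  case (less f)
  show ?case
  proof (cases "\<exists>u\<in>inner_verts t. 0 < arc_excess I t f u")
    case True
    then obtain u where "u \<in> inner_verts t" "0 < arc_excess I t f u" by blast
    then obtain f' where f': "nonneg_excess_flow I t x f'" "(f', f) \<in> peel_order I t"
      "height_weighted_excess I t x f - aug_cost I t f \<le> height_weighted_excess I t x f' - aug_cost I t f'"
      using exists_peel[OF less.prems] by blast
    then show ?thesis using less.IH[OF f'(2,1)] by linarith
  next
    case False
    have "arc_excess I t f w = 0" if "w \<in> inner_verts t" for w
      using less.prems that False unfolding nonneg_excess_flow_def by (meson antisym not_less)
    then have "height_weighted_excess I t x f = 0" unfolding height_weighted_excess_def by simp
    then show ?thesis using less.prems aug_cost_nonneg unfolding nonneg_excess_flow_def by simp
  qed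
qed

end

section \<open>The invariant of the algorithm\<close>

(* Excesses are taken in the final graph; since x vanishes on edges that have not
   arrived yet, this agrees with the excess at time t (excess_horizon_eq). *)
definition partial_flow :: "('v,'e) gnf \<Rightarrow> nat \<Rightarrow> ('e \<Rightarrow> real) \<Rightarrow> bool" where
  "partial_flow I t x \<longleftrightarrow> (\<forall>e. e \<notin> edges_at I t \<longrightarrow> x e = 0) \<and>
     (\<forall>e\<in>edges I. 0 \<le> x e \<and> ereal (x e) \<le> cap I e) \<and>
     (\<forall>v\<in>verts I - {sink I}. excess I (horizon I) x v \<le> demand I t v)"

lemma partial_flow_mono:
  assumes "partial_flow I t x" "t \<le> t'"
  shows "partial_flow I t' x"
proof -
  have "edges_at I t \<subseteq> edges_at I t'" using assms(2) unfolding edges_at_def by auto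
  moreover have "demand I t v \<le> demand I t' v" for v
    using assms(2) unfolding demand_def by auto
  ultimately show ?thesis using assms(1) unfolding partial_flow_def by (meson order_trans subsetD)
qed

lemma augment_off_edges_at:
  assumes "frac_aug I t x u f" "e \<notin> edges_at I t"
  shows "augment I x f \<theta> e = x e"
proof -
  have "f (Fw e) = 0" "f (Bw e) = 0"
    using assms unfolding frac_aug_def res_arcs_def by auto
  then show ?thesis unfolding augment_def by simp
qed

context gnf_network
begin

lemma no_edge_into_src_at:
  "s \<in> src I ` {1..horizon I} \<Longrightarrow> {e\<in>edges_at I t. ehead I e = s} = {}"
  using edges_at_subset no_edge_into_src by fastforce

lemma excess_horizon_eq:
  assumes "\<And>e. e \<notin> edges_at I t \<Longrightarrow> x e = 0"
  shows "excess I (horizon I) x v = excess I t x v"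
proof -
  have "(\<Sum>e\<in>{e\<in>edges I. etail I e = v}. x e) = (\<Sum>e\<in>{e\<in>edges_at I t. etail I e = v}. x e)"
    using finite_edges edges_at_subset[of I t] assms by (intro sum.mono_neutral_right) auto
  moreover have "(\<Sum>e\<in>{e\<in>edges I. ehead I e = v}. gain I e * x e) = (\<Sum>e\<in>{e\<in>edges_at I t. ehead I e = v}. gain I e * x e)"
    using finite_edges edges_at_subset[of I t] assms by (intro sum.mono_neutral_right) auto
  ultimately show ?thesis unfolding excess_def edges_at_horizon by simp
qed

lemma excess_not_arrived:
  assumes "v \<in> verts I - verts_at I t"
  shows "excess I t x v = 0"
proof -
  obtain t' where "t < t'" "t' \<le> horizon I" "v = src I t'"
    using assms unfolding verts_at_def by auto
  then have no_out: "{e\<in>edges_at I t. etail I e = v} = {}"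
    and no_in: "{e\<in>edges_at I t. ehead I e = v} = {}"
    using no_edge_into_src_at[of v t] unfolding edges_at_def by auto
  show ?thesis unfolding excess_def no_out no_in by simp
qed

lemma alg_step_partial_flow:
  assumes t: "t \<in> {1..horizon I}" and x: "partial_flow I t x" and step: "alg_step I t x x'"
  shows "partial_flow I t x'"
proof -
  obtain f \<theta> where aug: "aug_path I t x (src I t) f" and feasible: "feasible_step I t x f \<theta>"
    and x': "x' = augment I x f \<theta>"
    using step unfolding alg_step_def by blast
  have fa: "frac_aug I t x (src I t) f" using aug_path_frac_aug[OF aug] .
  have off: "x' e = 0" if "e \<notin> edges_at I t" for e
    using x augment_off_edges_at[OF fa that] that unfolding x' partial_flow_def by simp
  have cap: "0 \<le> x' e \<and> ereal (x' e) \<le> cap I e" if "e \<in> edges I" for e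
  proof (cases "e \<in> edges_at I t")
    case True
    then show ?thesis using feasible unfolding feasible_step_def x' by blast
  next
    case False
    then show ?thesis using off cap_pos[OF that] by (simp add: zero_ereal_def[symmetric] less_imp_le)
  qed
  have "excess I t x' v \<le> demand I t v" if v: "v \<in> verts I - {sink I}" for v
  proof -
    consider "v = src I t" | "v \<in> inner_verts t" "v \<noteq> src I t" | "v \<in> verts I - verts_at I t"
      using v by blast
    then show ?thesis
    proof cases
      case 1
      have src_t: "src I t \<in> src I ` {1..horizon I}" using t by blast
      have "excess I t x' v = outflow I t x' (src I t)"
        unfolding excess_def outflow_def 1 no_edge_into_src_at[OF src_t] by simp
      also have "\<dots> \<le> 1" using feasible unfolding feasible_step_def x' by blast
      finally show ?thesis using t 1 by (simp add: demand_def)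
    next
      case 2
      then have "excess I t x' v = excess I (horizon I) x v"
        using x excess_horizon_eq[of t x v] frac_aug_arc_excess[OF fa 2(1)]
        unfolding x' excess_augment partial_flow_def by simp
      then show ?thesis using x v unfolding partial_flow_def by simp
    next
      case 3
      then show ?thesis using excess_not_arrived by (simp add: demand_def)
    qed
  qed
  then show ?thesis using off cap excess_horizon_eq[OF off] unfolding partial_flow_def by simp
qed

lemma alg_run_partial_flow:
  assumes run: "alg_run I xs"
  shows "t \<le> horizon I \<Longrightarrow> partial_flow I t (xs t)"
proof (induction t)
  case 0
  have "xs 0 = (\<lambda>_. 0)" using run unfolding alg_run_def by blast
  then show ?case using cap_pos
    unfolding partial_flow_def excess_def demand_def by (simp add: zero_ereal_def[symmetric] less_imp_le)
next
  case (Suc t)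
  then have t: "Suc t \<in> {1..horizon I}" by simp
  then have "alg_phase I (Suc t) (xs t) (xs (Suc t))" using run unfolding alg_run_def by fastforce
  then have steps: "(alg_step I (Suc t))\<^sup>*\<^sup>* (xs t) (xs (Suc t))" unfolding alg_phase_def by blast
  have "partial_flow I (Suc t) (xs t)" using partial_flow_mono[of I t "xs t" "Suc t"] Suc by simp
  with steps show ?case
    by (induction rule: rtranclp_induct) (auto intro: alg_step_partial_flow[OF t])
qed

end

section \<open>Comparison with a scaled optimal flow\<close>

(* The residual flow turning x into z; a backward arc carries its flow measured at the
   head of its edge, hence the factor gain. *)
definition residual_difference :: "('v,'e) gnf \<Rightarrow> ('e \<Rightarrow> real) \<Rightarrow> ('e \<Rightarrow> real) \<Rightarrow> 'e arc \<Rightarrow> real" where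
  "residual_difference I x z a = (case a of
      Fw e \<Rightarrow> if e \<in> edges I then max (z e - x e) 0 else 0
    | Bw e \<Rightarrow> if e \<in> edges I then gain I e * max (x e - z e) 0 else 0)"

context gnf_network
begin

lemma residual_difference_nonneg: "0 \<le> residual_difference I x z a"
  using gain_pos by (cases a) (auto simp: residual_difference_def less_imp_le)

lemma arc_excess_residual_difference:
  "arc_excess I (horizon I) (residual_difference I x z) w = excess I (horizon I) z w - excess I (horizon I) x w"
proof -
  have "residual_difference I x z (Fw e) - residual_difference I x z (Bw e) / gain I e = z e - x e"
    if "e \<in> edges I" for e
    using gain_pos[OF that] that by (simp add: residual_difference_def max_def)
  then show ?thesis
    unfolding arc_excess_eq_excess excess_diff[symmetric] by (intro excess_cong) simp
qed

lemma supp_residual_difference: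
  assumes "\<And>e. e \<in> edges I \<Longrightarrow> 0 \<le> z e \<and> ereal (z e) \<le> cap I e"
  shows "supp (residual_difference I x z) \<subseteq> res_arcs I (horizon I) x"
proof
  fix a assume "a \<in> supp (residual_difference I x z)"
  then have pos: "0 < residual_difference I x z a" by (simp add: supp_def)
  show "a \<in> res_arcs I (horizon I) x"
  proof (cases a)
    case (Fw e)
    then have e: "e \<in> edges I" "ereal (x e) < ereal (z e)"
      using pos by (auto simp: residual_difference_def split: if_splits)
    then have "ereal (x e) < cap I e" using assms[OF e(1)] less_le_trans by blast
    then show ?thesis using Fw e(1) unfolding res_arcs_def by simp
  next
    case (Bw e)
    then have e: "e \<in> edges I" "z e < x e"
      using pos gain_pos by (auto simp: residual_difference_def zero_less_mult_iff split: if_splits)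
    then have "0 < x e" using assms[OF e(1)] by linarith
    then show ?thesis using Bw e(1) unfolding res_arcs_def by simp
  qed
qed

lemma aug_cost_residual_difference_le:
  assumes "\<And>e. e \<in> edges I \<Longrightarrow> 0 \<le> x e \<and> 0 \<le> z e"
  shows "aug_cost I (horizon I) (residual_difference I x z) \<le> flow_cost I (horizon I) z"
proof -
  have arcs: "all_arcs I (horizon I) = Fw ` edges I \<union> Bw ` edges I" unfolding all_arcs_def by simp
  have "aug_cost I (horizon I) (residual_difference I x z)
      = (\<Sum>e\<in>edges I. cst I e * residual_difference I x z (Fw e))"
    unfolding aug_cost_def arcs using finite_edges
    by (subst sum.union_disjoint) (auto simp: sum.reindex inj_on_def)
  also have "\<dots> \<le> (\<Sum>e\<in>edges I. cst I e * z e)"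
    using assms cst_pos by (intro sum_mono mult_left_mono) (auto simp: residual_difference_def less_imp_le)
  also have "\<dots> = flow_cost I (horizon I) z" unfolding flow_cost_def by simp
  finally show ?thesis .
qed

lemma valid_flow_exists:
  assumes "0 < c"
  shows "\<exists>y. valid_flow I (horizon I) (\<lambda>e. cap I e / ereal c) y"
proof -
  let ?S = "src I ` {1..horizon I}"
  define y where "y e = (if e \<in> dummy ` ?S then 1 else 0 :: real)" for e
  have dummy_S: "dummy s \<in> edges I \<and> etail I (dummy s) = s \<and> ehead I (dummy s) = sink I \<and> cap I (dummy s) = \<infinity>"
    if "s \<in> ?S" for s
    using dummy_edge src_inner that by blast
  have "ereal (y e) \<le> cap I e / ereal c" if "e \<in> edges I" for e
  proof (cases "e \<in> dummy ` ?S")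
    case True
    then show ?thesis using dummy_S assms by (auto simp: y_def)
  next
    case False
    then show ?thesis using cap_pos[OF that] assms by (simp add: y_def zero_ereal_def[symmetric] less_imp_le)
  qed
  moreover have "excess I (horizon I) y w = demand I (horizon I) w" if w: "w \<in> verts I - {sink I}" for w
  proof -
    have out: "e \<in> dummy ` ?S \<longleftrightarrow> e = dummy w \<and> w \<in> ?S" if "etail I e = w" for e
      using dummy_S that by auto
    have "(\<Sum>e\<in>{e\<in>edges I. etail I e = w}. y e) = (if w \<in> ?S then 1 else 0)"
    proof (cases "w \<in> ?S")
      case True
      then have "(\<Sum>e\<in>{e\<in>edges I. etail I e = w}. y e) = (\<Sum>e\<in>{e\<in>edges I. etail I e = w}. if e = dummy w then 1 else 0)"
        using out by (intro sum.cong) (auto simp: y_def)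
      then show ?thesis using True dummy_S finite_edges by simp
    next
      case False
      then show ?thesis using out by (simp add: y_def)
    qed
    moreover have "(\<Sum>e\<in>{e\<in>edges I. ehead I e = w}. gain I e * y e) = 0"
      using dummy_S w by (intro sum.neutral) (auto simp: y_def)
    ultimately show ?thesis unfolding excess_def demand_def by simp
  qed
  ultimately have "valid_flow I (horizon I) (\<lambda>e. cap I e / ereal c) y"
    unfolding valid_flow_def by (simp add: y_def)
  then show ?thesis by blast
qed

lemma sum_src_eq_sum_demand:
  "(\<Sum>t=1..horizon I. h (src I t)) = (\<Sum>w\<in>verts I - {sink I}. demand I (horizon I) w * h w)"
proof -
  have "(\<Sum>t=1..horizon I. h (src I t)) = (\<Sum>w\<in>src I ` {1..horizon I}. h w)"
    using sum.reindex[OF inj_on_src, of h] by simp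
  also have "\<dots> = (\<Sum>w\<in>verts I - {sink I}. if w \<in> src I ` {1..horizon I} then h w else 0)"
    using src_inner finite_verts by (subst sum.inter_restrict[symmetric]) (auto intro: sum.cong)
  also have "\<dots> = (\<Sum>w\<in>verts I - {sink I}. demand I (horizon I) w * h w)"
    unfolding demand_def by (intro sum.cong) auto
  finally show ?thesis .
qed

lemma height_sum_le_flow_cost:
  assumes x: "partial_flow I (horizon I) x" and "0 < \<epsilon>"
    and y: "valid_flow I (horizon I) (\<lambda>e. cap I e / ereal (1 + \<epsilon>)) y"
  shows "\<epsilon> * (\<Sum>t=1..horizon I. height I (horizon I) x (src I t)) \<le> (1 + \<epsilon>) * flow_cost I (horizon I) y"
proof -
  let ?T = "horizon I" and ?z = "\<lambda>e. (1 + \<epsilon>) * y e"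
  let ?g = "residual_difference I x ?z"
  have x_cap: "\<And>e. e \<in> edges I \<Longrightarrow> 0 \<le> x e"
    and x_dem: "\<And>v. v \<in> verts I - {sink I} \<Longrightarrow> excess I ?T x v \<le> demand I ?T v"
    using x unfolding partial_flow_def by auto
  have z_cap: "0 \<le> ?z e \<and> ereal (?z e) \<le> cap I e" if "e \<in> edges I" for e
    using y that \<open>0 < \<epsilon>\<close> ereal_le_divide_pos[of "ereal (1 + \<epsilon>)" "ereal (y e)" "cap I e"]
    unfolding valid_flow_def by auto
  have exc: "\<epsilon> * demand I ?T w \<le> arc_excess I ?T ?g w" if "w \<in> verts I - {sink I}" for w
    using x_dem[OF that] y that unfolding arc_excess_residual_difference excess_scale valid_flow_def
    by (simp add: algebra_simps)
  have "0 \<le> \<epsilon> * demand I ?T w" for w using \<open>0 < \<epsilon>\<close> by (simp add: demand_def)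
  then have "nonneg_excess_flow I ?T x ?g"
    using residual_difference_nonneg supp_residual_difference[OF z_cap] exc
    unfolding nonneg_excess_flow_def verts_at_horizon by (blast intro: order_trans)
  have "\<epsilon> * (\<Sum>t=1..?T. height I ?T x (src I t)) = (\<Sum>w\<in>verts I - {sink I}. \<epsilon> * demand I ?T w * height I ?T x w)"
    unfolding sum_src_eq_sum_demand[of "height I ?T x"] by (simp add: sum_distrib_left mult.assoc)
  also have "\<dots> \<le> height_weighted_excess I ?T x ?g"
    unfolding height_weighted_excess_def verts_at_horizon
    using exc height_nonneg[of _ ?T x] by (intro sum_mono mult_right_mono) auto
  also have "\<dots> \<le> aug_cost I ?T ?g"
    by (rule height_weighted_excess_le_aug_cost) fact
  also have "\<dots> \<le> flow_cost I ?T ?z"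
    using x_cap z_cap by (intro aug_cost_residual_difference_le) simp
  also have "\<dots> = (1 + \<epsilon>) * flow_cost I ?T y"
    unfolding flow_cost_def by (simp add: sum_distrib_left algebra_simps)
  finally show ?thesis .
qed

end

theorem lemma4:
  fixes I :: "('v,'e) gnf" and B :: real and dummy :: "'v \<Rightarrow> 'e"
    and xs :: "nat \<Rightarrow> 'e \<Rightarrow> real" and \<epsilon> :: real
  assumes "gnf_instance I B dummy"
    and "alg_run I xs"
    and "\<epsilon> > 0"
  shows "(\<Sum>t=1..horizon I. height I (horizon I) (xs (horizon I)) (src I t))
         \<le> (1 + \<epsilon>) / \<epsilon> *
           min_flow_cost I (horizon I) (\<lambda>e. cap I e / ereal (1 + \<epsilon>))"
proof -
  interpret gnf_network I B dummy by (rule gnf_network.intro) (fact assms(1))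
  let ?T = "horizon I" and ?cap = "\<lambda>e. cap I e / ereal (1 + \<epsilon>)"
  let ?H = "\<Sum>t=1..?T. height I ?T (xs ?T) (src I t)"
  have x: "partial_flow I ?T (xs ?T)" by (rule alg_run_partial_flow[OF assms(2) order_refl])
  have "\<epsilon> / (1 + \<epsilon>) * ?H \<le> min_flow_cost I ?T ?cap"
    unfolding min_flow_cost_def
  proof (rule cInf_greatest)
    \<comment> \<open>Otherwise the infimum would be the junk value Inf {}.\<close>
    show "flow_cost I ?T ` {y. valid_flow I ?T ?cap y} \<noteq> {}"
      using valid_flow_exists[of "1 + \<epsilon>"] assms(3) by auto
  next
    fix c assume "c \<in> flow_cost I ?T ` {y. valid_flow I ?T ?cap y}"
    then obtain y where "valid_flow I ?T ?cap y" "c = flow_cost I ?T y" by blast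
    then show "\<epsilon> / (1 + \<epsilon>) * ?H \<le> c"
      using height_sum_le_flow_cost[OF x assms(3)] assms(3) by (simp add: field_simps)
  qed
  then show ?thesis using assms(3) by (simp add: field_simps)
qed

end
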